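(* If $M$ and $N$ are tame manifolds with equivalent models, then $M$ and $N$ are properly homotopy equivalent.
   Context: A manifold $M$ without boundary is tame if there exists a compact connected (topological) manifold $W$ with boundary such that $M$ is homeomorphic to $W \setminus \partial W$. A model of a tame manifold $M$ is a finite CW-pair $(X,A)$ (finite CW-complex $X$ with finite subcomplex $A$) that is homotopy equivalent as a pair of spaces to $(W,\partial W)$, where $W$ is a compact connected manifold with boundary whose interior is homeomorphic to $M$. Two models are equivalent if they are homotopy equivalent as pairs of spaces. Proper homotopy equivalence means homotopy equivalence via proper maps and proper homotopies. *)

theory Defs
  imports "HOL-Analysis.Analysis"
begin

section \<open>Euclidean pieces (subspaces of Euclidean_space n, coordinates 0..n-1)\<close>

definition half_space :: "nat \<Rightarrow> (nat \<Rightarrow> real) topology" where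
  "half_space n = subtopology (Euclidean_space n)
      {x. n = 0 \<or> x 0 \<ge> 0}"

definition closed_disk :: "nat \<Rightarrow> (nat \<Rightarrow> real) topology" where
  "closed_disk n = subtopology (Euclidean_space n) {x. (\<Sum>i<n. x i ^ 2) \<le> 1}"

definition open_disk_set :: "nat \<Rightarrow> (nat \<Rightarrow> real) set" where
  "open_disk_set n = {x \<in> topspace (Euclidean_space n). (\<Sum>i<n. x i ^ 2) < 1}"

definition disk_boundary_set :: "nat \<Rightarrow> (nat \<Rightarrow> real) set" where
  "disk_boundary_set n = {x \<in> topspace (Euclidean_space n). (\<Sum>i<n. x i ^ 2) = 1}"

definition manifold_with_boundary_dim :: "nat \<Rightarrow> 'a topology \<Rightarrow> bool" where
  "manifold_with_boundary_dim n W \<longleftrightarrow>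
     Hausdorff_space W \<and> second_countable W \<and>
     (\<forall>x \<in> topspace W. \<exists>U V. openin W U \<and> x \<in> U \<and> openin (half_space n) V \<and>
          subtopology W U homeomorphic_space subtopology (half_space n) V)"

definition manifold_with_boundary :: "'a topology \<Rightarrow> bool" where
  "manifold_with_boundary W \<longleftrightarrow> (\<exists>n. manifold_with_boundary_dim n W)"

definition manifold_interior :: "'a topology \<Rightarrow> 'a set" where
  "manifold_interior W = {x \<in> topspace W. \<exists>n U V. openin W U \<and> x \<in> U \<and>
        openin (Euclidean_space n) V \<and>
        subtopology W U homeomorphic_space subtopology (Euclidean_space n) V}"

definition manifold_boundary :: "'a topology \<Rightarrow> 'a set" where
  "manifold_boundary W = topspace W - manifold_interior W"

definition tame_compactification :: "'w topology \<Rightarrow> 'a topology \<Rightarrow> bool" where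
  "tame_compactification W M \<longleftrightarrow>
     manifold_with_boundary W \<and> compact_space W \<and> connected_space W \<and>
     M homeomorphic_space subtopology W (manifold_interior W)"

definition tame :: "'w itself \<Rightarrow> 'a topology \<Rightarrow> bool" where
  "tame (_ :: 'w itself) M \<longleftrightarrow> (\<exists>W :: 'w topology. tame_compactification W M)"

text \<open>A finite CW structure: finitely many cells (indexed by a finite set I), each with a
  characteristic map from the closed disk of dimension d i that is a homeomorphism from the
  open disk onto its image (the open cell); the open cells partition the space and the
  boundary sphere of each cell is mapped into the union of cells of lower dimension.
  (Closure finiteness and the weak topology are automatic for finitely many cells.)\<close>
definition CW_structure ::
  "'a topology \<Rightarrow> nat set \<Rightarrow> (nat \<Rightarrow> nat) \<Rightarrow> (nat \<Rightarrow> (nat \<Rightarrow> real) \<Rightarrow> 'a) \<Rightarrow> bool" where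
  "CW_structure X I d \<Phi> \<longleftrightarrow>
     Hausdorff_space X \<and> finite I \<and>
     (\<forall>i\<in>I. continuous_map (closed_disk (d i)) X (\<Phi> i)) \<and>
     (\<forall>i\<in>I. homeomorphic_map (subtopology (Euclidean_space (d i)) (open_disk_set (d i)))
                 (subtopology X (\<Phi> i ` open_disk_set (d i))) (\<Phi> i)) \<and>
     (\<forall>i\<in>I. \<forall>j\<in>I. i \<noteq> j \<longrightarrow> \<Phi> i ` open_disk_set (d i) \<inter> \<Phi> j ` open_disk_set (d j) = {}) \<and>
     (\<Union>i\<in>I. \<Phi> i ` open_disk_set (d i)) = topspace X \<and>
     (\<forall>i\<in>I. \<Phi> i ` disk_boundary_set (d i) \<subseteq>
               (\<Union>j\<in>{j\<in>I. d j < d i}. \<Phi> j ` open_disk_set (d j)))"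

definition finite_CW_pair :: "'a topology \<Rightarrow> 'a set \<Rightarrow> bool" where
  "finite_CW_pair X A \<longleftrightarrow>
     (\<exists>I d \<Phi> J. CW_structure X I d \<Phi> \<and> J \<subseteq> I \<and>
        A = (\<Union>j\<in>J. \<Phi> j ` open_disk_set (d j)) \<and> closedin X A)"

definition pair_map :: "'a topology \<Rightarrow> 'a set \<Rightarrow> 'b topology \<Rightarrow> 'b set \<Rightarrow> ('a \<Rightarrow> 'b) \<Rightarrow> bool" where
  "pair_map X A Y B f \<longleftrightarrow> continuous_map X Y f \<and> f ` A \<subseteq> B"

definition pair_homotopy_equivalent ::
  "'a topology \<Rightarrow> 'a set \<Rightarrow> 'b topology \<Rightarrow> 'b set \<Rightarrow> bool" where
  "pair_homotopy_equivalent X A Y B \<longleftrightarrow>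
     (\<exists>f g. pair_map X A Y B f \<and> pair_map Y B X A g \<and>
        homotopic_with (\<lambda>h. h ` A \<subseteq> A) X X (g \<circ> f) id \<and>
        homotopic_with (\<lambda>h. h ` B \<subseteq> B) Y Y (f \<circ> g) id)"

definition model_via :: "'w topology \<Rightarrow> 'a topology \<Rightarrow> 'c topology \<Rightarrow> 'c set \<Rightarrow> bool" where
  "model_via W M X A \<longleftrightarrow>
     finite_CW_pair X A \<and> tame_compactification W M \<and>
     pair_homotopy_equivalent X A W (manifold_boundary W)"

definition proper_cont :: "'a topology \<Rightarrow> 'b topology \<Rightarrow> ('a \<Rightarrow> 'b) \<Rightarrow> bool" where
  "proper_cont X Y f \<longleftrightarrow> continuous_map X Y f \<and>
     (\<forall>K. compactin Y K \<longrightarrow> compactin X {x \<in> topspace X. f x \<in> K})"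

definition proper_homotopic :: "'a topology \<Rightarrow> 'b topology \<Rightarrow> ('a \<Rightarrow> 'b) \<Rightarrow> ('a \<Rightarrow> 'b) \<Rightarrow> bool" where
  "proper_homotopic X Y f g \<longleftrightarrow>
     (\<exists>H. proper_cont (prod_topology (top_of_set {0..1::real}) X) Y H \<and>
        (\<forall>x\<in>topspace X. H (0, x) = f x) \<and> (\<forall>x\<in>topspace X. H (1, x) = g x))"

definition proper_homotopy_equivalent :: "'a topology \<Rightarrow> 'b topology \<Rightarrow> bool" where
  "proper_homotopy_equivalent X Y \<longleftrightarrow>
     (\<exists>f g. proper_cont X Y f \<and> proper_cont Y X g \<and>
        proper_homotopic X X (g \<circ> f) id \<and> proper_homotopic Y Y (f \<circ> g) id)"

end

theory Submission
  imports Defs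
begin

(* Let W be a compact manifold with boundary and I its interior. The boundary is closed and W is
   locally metrizable, so there is rho : W -> [0,1] vanishing exactly on the boundary; pushing
   upwards in the first coordinate of finitely many boundary charts, one after the other, gives a
   homotopy h from the identity with h_t(W) inside I for all t > 0.
   Given a homotopy equivalence of pairs f : (W1, dW1) -> (W2, dW2) with inverse g, the map
   F x = h2 (rho1 x, f x) agrees with f on dW1 and sends I1 into I2. As W1 is compact and W2 is
   Hausdorff, F restricts to a proper map I1 -> I2. The same holds for G y = h1 (rho2 y, g y), and
   G o F is homotopic to the identity through maps preserving both I1 and dW1, which restricts to a
   proper homotopy on I1. The models only serve to compose the pair homotopy equivalences
   (W1, dW1) ~ (X, A) ~ (Y, B) ~ (W2, dW2). *)

section \<open>Proper maps and proper homotopies\<close>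

lemma proper_cont_compose:
  assumes "proper_cont X Y f" "proper_cont Y Z g"
  shows "proper_cont X Z (g \<circ> f)"
  unfolding proper_cont_def
proof (intro conjI allI impI)
  show "continuous_map X Z (g \<circ> f)"
    using assms unfolding proper_cont_def by (metis continuous_map_compose)
  fix K assume "compactin Z K"
  then have "compactin X {x \<in> topspace X. f x \<in> {y \<in> topspace Y. g y \<in> K}}"
    using assms unfolding proper_cont_def by blast
  moreover have "{x \<in> topspace X. f x \<in> {y \<in> topspace Y. g y \<in> K}} = {x \<in> topspace X. (g \<circ> f) x \<in> K}"
    using assms(1) unfolding proper_cont_def continuous_map_def by auto
  ultimately show "compactin X {x \<in> topspace X. (g \<circ> f) x \<in> K}" by simp
qed

lemma proper_cont_homeomorphic_maps:
  assumes "homeomorphic_maps X Y f g"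
  shows "proper_cont X Y f"
  unfolding proper_cont_def
proof (intro conjI allI impI)
  have g: "continuous_map Y X g" and gf: "\<And>x. x \<in> topspace X \<Longrightarrow> g (f x) = x"
    and fg: "\<And>y. y \<in> topspace Y \<Longrightarrow> f (g y) = y"
    using assms unfolding homeomorphic_maps_def by auto
  show "continuous_map X Y f"
    using assms by (simp add: homeomorphic_maps_def)
  fix K assume K: "compactin Y K"
  have "{x \<in> topspace X. f x \<in> K} = g ` K"
  proof
    show "{x \<in> topspace X. f x \<in> K} \<subseteq> g ` K"
      using gf by (metis (mono_tags, lifting) image_eqI mem_Collect_eq subsetI)
    show "g ` K \<subseteq> {x \<in> topspace X. f x \<in> K}"
      using g fg compactin_subset_topspace[OF K] by (auto simp: continuous_map_def)
  qed
  then show "compactin X {x \<in> topspace X. f x \<in> K}"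
    using K g image_compactin by metis
qed

lemma proper_homotopic_cong:
  assumes "proper_homotopic X Y f g" "\<And>x. x \<in> topspace X \<Longrightarrow> f' x = f x"
  shows "proper_homotopic X Y f' g"
  using assms unfolding proper_homotopic_def by simp

lemma proper_homotopic_conj_homeomorphic_maps:
  assumes e: "homeomorphic_maps M S e e'" and k: "proper_homotopic S S k id"
  shows "proper_homotopic M M (e' \<circ> k \<circ> e) id"
proof -
  let ?I = "top_of_set {0..1::real}"
  obtain H where H: "proper_cont (prod_topology ?I S) S H"
    and H0: "\<forall>x\<in>topspace S. H (0, x) = k x" and H1: "\<forall>x\<in>topspace S. H (1, x) = x"
    using k unfolding proper_homotopic_def by auto
  have "homeomorphic_maps ?I ?I id id"
    by (simp add: homeomorphic_maps_id)
  then have "homeomorphic_maps (prod_topology ?I M) (prod_topology ?I S)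
      (\<lambda>(t, x). (id t, e x)) (\<lambda>(t, x). (id t, e' x))"
    using e by (simp add: homeomorphic_maps_prod id_def)
  then have "proper_cont (prod_topology ?I M) (prod_topology ?I S) (\<lambda>(t, x). (t, e x))"
    using proper_cont_homeomorphic_maps by (simp add: id_def)
  then have "proper_cont (prod_topology ?I M) S (H \<circ> (\<lambda>(t, x). (t, e x)))"
    using H by (rule proper_cont_compose)
  then have "proper_cont (prod_topology ?I M) M (e' \<circ> (H \<circ> (\<lambda>(t, x). (t, e x))))"
    using e homeomorphic_maps_sym proper_cont_homeomorphic_maps proper_cont_compose by blast
  moreover have "e x \<in> topspace S" "e' (e x) = x" if "x \<in> topspace M" for x
    using e that unfolding homeomorphic_maps_def continuous_map_def by auto
  ultimately show ?thesis
    unfolding proper_homotopic_def using H0 H1 by (intro exI[of _ "e' \<circ> (H \<circ> (\<lambda>(t, x). (t, e x)))"]) auto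
qed

lemma proper_homotopy_equivalent_sym:
  "proper_homotopy_equivalent X Y \<Longrightarrow> proper_homotopy_equivalent Y X"
  unfolding proper_homotopy_equivalent_def by auto

lemma proper_homotopy_equivalent_homeomorphic_maps_left:
  assumes e: "homeomorphic_maps M S e e'" and SN: "proper_homotopy_equivalent S N"
  shows "proper_homotopy_equivalent M N"
proof -
  obtain f g where f: "proper_cont S N f" and g: "proper_cont N S g"
    and gf: "proper_homotopic S S (g \<circ> f) id" and fg: "proper_homotopic N N (f \<circ> g) id"
    using SN unfolding proper_homotopy_equivalent_def by blast
  have "proper_homotopic M M (e' \<circ> (g \<circ> f) \<circ> e) id"
    by (rule proper_homotopic_conj_homeomorphic_maps[OF e gf])
  moreover have "proper_homotopic N N ((f \<circ> e) \<circ> (e' \<circ> g)) id"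
  proof (rule proper_homotopic_cong[OF fg])
    fix y assume "y \<in> topspace N"
    then have "g y \<in> topspace S"
      using g unfolding proper_cont_def continuous_map_def by auto
    then show "((f \<circ> e) \<circ> (e' \<circ> g)) y = (f \<circ> g) y"
      using e unfolding homeomorphic_maps_def by simp
  qed
  moreover have "proper_cont M N (f \<circ> e)" "proper_cont N M (e' \<circ> g)"
    using e f g proper_cont_compose proper_cont_homeomorphic_maps homeomorphic_maps_sym by blast+
  moreover have "(e' \<circ> g) \<circ> (f \<circ> e) = e' \<circ> (g \<circ> f) \<circ> e"
    by (simp add: fun_eq_iff)
  ultimately show ?thesis
    unfolding proper_homotopy_equivalent_def by metis
qed

lemma proper_homotopy_equivalent_homeomorphic_spaces:
  assumes "M homeomorphic_space S" "N homeomorphic_space T" "proper_homotopy_equivalent S T"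
  shows "proper_homotopy_equivalent M N"
  using assms proper_homotopy_equivalent_homeomorphic_maps_left proper_homotopy_equivalent_sym
  unfolding homeomorphic_space_def by metis

text \<open>Preimages of compact subsets of \<open>J\<close> are closed in the compact space \<open>Z\<close> and lie in \<open>I\<close>.\<close>
lemma proper_cont_restrict_compact:
  assumes k: "continuous_map Z W k" and Z: "compact_space Z" and W: "Hausdorff_space W"
    and kI: "k ` I \<subseteq> J" and kB: "k ` (topspace Z - I) \<subseteq> topspace W - J"
  shows "proper_cont (subtopology Z I) (subtopology W J) k"
  unfolding proper_cont_def
proof (intro conjI allI impI)
  show "continuous_map (subtopology Z I) (subtopology W J) k"
    using k kI by (auto simp: continuous_map_in_subtopology continuous_map_from_subtopology)
  fix K assume "compactin (subtopology W J) K"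
  then have K: "compactin W K" "K \<subseteq> J" by (auto simp: compactin_subtopology)
  then have "closedin Z {x \<in> topspace Z. k x \<in> K}"
    using k W compactin_imp_closedin closedin_continuous_map_preimage by blast
  then have "compactin Z {x \<in> topspace Z. k x \<in> K}"
    using Z closedin_compact_space by blast
  moreover have "{x \<in> topspace Z. k x \<in> K} \<subseteq> I"
    using kB K(2) by blast
  moreover have "{x \<in> topspace (subtopology Z I). k x \<in> K} = {x \<in> topspace Z. k x \<in> K}"
    using calculation(2) by auto
  ultimately show "compactin (subtopology Z I) {x \<in> topspace (subtopology Z I). k x \<in> K}"
    by (simp add: compactin_subtopology)
qed

lemma proper_homotopic_restrict_compact:
  assumes hom: "homotopic_with (\<lambda>k. k ` I \<subseteq> J \<and> k ` (topspace Z - I) \<subseteq> topspace W - J) Z W f g"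
    and Z: "compact_space Z" and W: "Hausdorff_space W"
  shows "proper_homotopic (subtopology Z I) (subtopology W J) f g"
proof -
  let ?T = "prod_topology (top_of_set {0..1::real}) Z"
  obtain H where H: "continuous_map ?T W H" and H0: "\<And>x. H (0, x) = f x" and H1: "\<And>x. H (1, x) = g x"
    and HP: "\<And>t. t \<in> {0..1} \<Longrightarrow> (\<lambda>x. H (t, x)) ` I \<subseteq> J \<and> (\<lambda>x. H (t, x)) ` (topspace Z - I) \<subseteq> topspace W - J"
    using hom unfolding homotopic_with_def by metis
  have "compact_space ?T"
    using Z by (simp add: compact_space_prod_topology compact_space_subtopology)
  moreover have "H ` ({0..1} \<times> I) \<subseteq> J"
    using HP by (auto simp: image_subset_iff)
  moreover have "H ` (topspace ?T - {0..1} \<times> I) \<subseteq> topspace W - J"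
  proof
    fix y assume "y \<in> H ` (topspace ?T - {0..1} \<times> I)"
    then obtain r where r: "r \<in> topspace ?T - {0..1} \<times> I" and y: "y = H r"
      by blast
    obtain t x where "r = (t, x)"
      by fastforce
    with r y have "t \<in> {0..1}" "x \<in> topspace Z - I" "y = H (t, x)"
      by auto
    then show "y \<in> topspace W - J"
      using HP[of t] by (auto simp: image_subset_iff)
  qed
  ultimately have "proper_cont (subtopology ?T ({0..1} \<times> I)) (subtopology W J) H"
    using proper_cont_restrict_compact[OF H _ W] by blast
  moreover have "subtopology ?T ({0..1} \<times> I) = prod_topology (top_of_set {0..1::real}) (subtopology Z I)"
    by (simp add: prod_topology_subtopology subtopology_subtopology)
  ultimately show ?thesis
    unfolding proper_homotopic_def using H0 H1 by auto
qed

lemma pair_homotopy_equivalent_sym: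
  "pair_homotopy_equivalent X A Y B \<Longrightarrow> pair_homotopy_equivalent Y B X A"
  unfolding pair_homotopy_equivalent_def by blast

lemma pair_homotopy_equivalent_trans:
  assumes "pair_homotopy_equivalent X A Y B" "pair_homotopy_equivalent Y B Z C"
  shows "pair_homotopy_equivalent X A Z C"
proof -
  obtain f1 g1 where f1: "pair_map X A Y B f1" and g1: "pair_map Y B X A g1"
    and gf1: "homotopic_with (\<lambda>h. h ` A \<subseteq> A) X X (g1 \<circ> f1) id"
    and fg1: "homotopic_with (\<lambda>h. h ` B \<subseteq> B) Y Y (f1 \<circ> g1) id"
    using assms(1) unfolding pair_homotopy_equivalent_def by blast
  obtain f2 g2 where f2: "pair_map Y B Z C f2" and g2: "pair_map Z C Y B g2"
    and gf2: "homotopic_with (\<lambda>h. h ` B \<subseteq> B) Y Y (g2 \<circ> f2) id"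
    and fg2: "homotopic_with (\<lambda>h. h ` C \<subseteq> C) Z Z (f2 \<circ> g2) id"
    using assms(2) unfolding pair_homotopy_equivalent_def by blast
  have "homotopic_with (\<lambda>h. h ` A \<subseteq> A) X X (g1 \<circ> ((g2 \<circ> f2) \<circ> f1)) (g1 \<circ> (id \<circ> f1))"
  proof (rule homotopic_with_compose_continuous_map_left)
    show "homotopic_with (\<lambda>h. h ` A \<subseteq> B) X Y ((g2 \<circ> f2) \<circ> f1) (id \<circ> f1)"
      by (rule homotopic_with_compose_continuous_map_right[OF gf2])
         (use f1 in \<open>auto simp: pair_map_def image_comp[symmetric]\<close>)
  qed (use g1 in \<open>auto simp: pair_map_def image_comp[symmetric]\<close>)
  then have gf: "homotopic_with (\<lambda>h. h ` A \<subseteq> A) X X ((g1 \<circ> g2) \<circ> (f2 \<circ> f1)) id"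
    using homotopic_with_trans gf1 by (simp add: o_assoc)
  have "homotopic_with (\<lambda>h. h ` C \<subseteq> C) Z Z (f2 \<circ> ((f1 \<circ> g1) \<circ> g2)) (f2 \<circ> (id \<circ> g2))"
  proof (rule homotopic_with_compose_continuous_map_left)
    show "homotopic_with (\<lambda>h. h ` C \<subseteq> B) Z Y ((f1 \<circ> g1) \<circ> g2) (id \<circ> g2)"
      by (rule homotopic_with_compose_continuous_map_right[OF fg1])
         (use g2 in \<open>auto simp: pair_map_def image_comp[symmetric]\<close>)
  qed (use f2 in \<open>auto simp: pair_map_def image_comp[symmetric]\<close>)
  then have fg: "homotopic_with (\<lambda>h. h ` C \<subseteq> C) Z Z ((f2 \<circ> f1) \<circ> (g1 \<circ> g2)) id"
    using homotopic_with_trans fg2 by (simp add: o_assoc)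
  have "pair_map X A Z C (f2 \<circ> f1)" "pair_map Z C X A (g1 \<circ> g2)"
    using f1 f2 g1 g2 unfolding pair_map_def
    by (auto intro: continuous_map_compose simp: image_subset_iff)
  then show ?thesis
    unfolding pair_homotopy_equivalent_def using gf fg by blast
qed

section \<open>Closed sets of compact locally metrizable spaces are zero sets\<close>

lemma compact_space_pointed_cover:
  assumes "compact_space X"
    and "\<And>x. x \<in> topspace X \<Longrightarrow> openin X (Q x)" "\<And>x. x \<in> topspace X \<Longrightarrow> x \<in> Q x"
  obtains F where "finite F" "F \<subseteq> topspace X" "topspace X \<subseteq> (\<Union>x\<in>F. Q x)"
proof -
  have "compactin X (topspace X)"
    using assms(1) compact_space_def by blast
  moreover have "\<And>V. V \<in> Q ` topspace X \<Longrightarrow> openin X V" "topspace X \<subseteq> \<Union> (Q ` topspace X)"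
    using assms(2,3) by blast+
  ultimately obtain \<F> where "finite \<F>" "\<F> \<subseteq> Q ` topspace X" "topspace X \<subseteq> \<Union>\<F>"
    using compactinD by metis
  then show ?thesis
    using that finite_subset_image by metis
qed

lemma (in Metric_space) closedin_Inf_mdist_zero_set:
  assumes "closedin mtopology S" "S \<noteq> {}"
  shows "continuous_map mtopology euclideanreal (\<lambda>u. Inf (d u ` S))"
    and "\<And>x. 0 \<le> Inf (d x ` S)"
    and "\<And>x. x \<in> M \<Longrightarrow> Inf (d x ` S) = 0 \<longleftrightarrow> x \<in> S"
proof -
  have SM: "S \<subseteq> M" using assms closedin_subset by fastforce
  have bdd [simp]: "bdd_below (d u ` A)" for u A
    by (meson bdd_belowI2 nonneg)
  have "Inf (d x ` S) - d x y \<le> Inf (d y ` S)" if "x \<in> M" "y \<in> M" for x y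
  proof -
    have "Inf (d x ` S) \<le> d x y + d y u" if "u \<in> S" for u
      using cINF_lower[OF bdd that, of x] triangle[of x y u] SM \<open>x \<in> M\<close> \<open>y \<in> M\<close> that by auto
    then show ?thesis
      using assms(2) by (force simp add: le_cInf_iff)
  qed
  note Lip = this
  have "dist (Inf (d x ` S)) (Inf (d y ` S)) \<le> d x y" if "x \<in> M" "y \<in> M" for x y
    using Lip[OF that] Lip[OF that(2,1)] commute[of x y]
    by (simp add: dist_real_def abs_le_iff)
  then have "Lipschitz_continuous_map Self euclidean_metric (\<lambda>u. Inf (d u ` S))"
    unfolding Lipschitz_continuous_map_def by (force intro!: exI [where x=1])
  from Lipschitz_continuous_imp_continuous_map[OF this]
  show "continuous_map mtopology euclideanreal (\<lambda>u. Inf (d u ` S))"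
    by (simp add: Self_def)
  show nonneg: "0 \<le> Inf (d x ` S)" for x
    using assms(2) by (simp add: le_cInf_iff)
  fix x assume "x \<in> M"
  show "Inf (d x ` S) = 0 \<longleftrightarrow> x \<in> S"
  proof
    assume "x \<in> S"
    then show "Inf (d x ` S) = 0"
      using cINF_lower[OF bdd \<open>x \<in> S\<close>, of x] nonneg[of x] \<open>x \<in> M\<close> by simp
  next
    assume 0: "Inf (d x ` S) = 0"
    show "x \<in> S"
    proof (rule ccontr)
      assume "x \<notin> S"
      then have "openin mtopology (M - S)" "x \<in> M - S"
        using assms \<open>x \<in> M\<close> by (auto simp: openin_diff)
      then obtain r where "r > 0" and r: "mball x r \<subseteq> M - S"
        by (meson openin_mtopology)
      then have "r \<le> d x y" if "y \<in> S" for y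
        using SM that \<open>x \<in> M\<close> by (meson Diff_iff in_mball linorder_not_le subsetD)
      then have "r \<le> Inf (d x ` S)"
        using assms(2) by (simp add: le_cInf_iff)
      with \<open>r > 0\<close> 0 show False by simp
    qed
  qed
qed

lemma metrizable_space_closedin_zero_set:
  assumes "metrizable_space X" "closedin X S"
  obtains g where "continuous_map X euclideanreal g" "\<And>x. 0 \<le> g x"
    "\<And>x. x \<in> topspace X \<Longrightarrow> g x = 0 \<longleftrightarrow> x \<in> S"
proof (cases "S = {}")
  case True
  show ?thesis by (rule that[of "\<lambda>_. 1"]) (auto simp: True)
next
  case False
  obtain M d where md: "Metric_space M d" "Metric_space.mtopology M d = X"
    using assms(1) unfolding metrizable_space_def by blast
  interpret Metric_space M d by (fact md(1))
  show ?thesis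
    using closedin_Inf_mdist_zero_set[of S] md(2) assms(2) False that[of "\<lambda>u. Inf (d u ` S)"] by auto
qed

lemma Urysohn_bump:
  assumes "compact_space X" "Hausdorff_space X" "openin X W" "x \<in> W"
  obtains Q K u where "openin X Q" "x \<in> Q" "closedin X K" "K \<subseteq> W"
    "continuous_map X (top_of_set {0..1::real}) u"
    "\<And>y. y \<in> Q \<Longrightarrow> u y = 1" "\<And>y. y \<in> topspace X - K \<Longrightarrow> u y = 0"
proof -
  have base: "neighbourhood_base_of (closedin X) X"
    using assms(1,2) compact_Hausdorff_imp_regular_space neighbourhood_base_of_closedin by blast
  obtain U K where U: "openin X U" "x \<in> U" "U \<subseteq> K" and K: "closedin X K" "K \<subseteq> W"
    using base assms(3,4) unfolding neighbourhood_base_of by metis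
  obtain Q C where Q: "openin X Q" "x \<in> Q" "Q \<subseteq> C" and C: "closedin X C" "C \<subseteq> U"
    using base U(1,2) unfolding neighbourhood_base_of by metis
  have "normal_space X"
    using assms(1,2) compact_Hausdorff_or_regular_imp_normal_space by blast
  moreover have "closedin X (topspace X - U)" "disjnt (topspace X - U) C"
    using U(1) C(2) by (auto simp: disjnt_def)
  ultimately obtain u where u: "continuous_map X (top_of_set {0..1::real}) u"
      and u0: "u ` (topspace X - U) \<subseteq> {0}" and u1: "u ` C \<subseteq> {1}"
    using Urysohn_lemma[of X "topspace X - U" C 0 1] C(1) by auto
  show ?thesis
  proof (rule that[OF Q(1,2) K u])
    show "u y = 1" if "y \<in> Q" for y
      using that u1 Q(3) by blast
    show "u y = 0" if "y \<in> topspace X - K" for y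
      using that u0 U(3) by blast
  qed
qed

lemma continuous_map_if_openin_closedin:
  assumes U: "openin X U" and K: "closedin X K" "K \<subseteq> U"
    and f: "continuous_map (subtopology X U) Y f" and g: "continuous_map X Y g"
    and fg: "\<And>x. x \<in> U - K \<Longrightarrow> f x = g x"
  shows "continuous_map X Y (\<lambda>x. if x \<in> U then f x else g x)"
proof (rule pasting_lemma[where I = "UNIV :: bool set" and T = "\<lambda>b. if b then U else topspace X - K"
      and f = "\<lambda>_ x. if x \<in> U then f x else g x"])
  fix b :: bool
  show "openin X (if b then U else topspace X - K)"
    using U K by auto
  show "continuous_map (subtopology X (if b then U else topspace X - K)) Y
          (\<lambda>x. if x \<in> U then f x else g x)"
  proof (cases b)
    case True
    then show ?thesis
      using f by (auto intro: continuous_map_eq)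
  next
    case False
    have "continuous_map (subtopology X (topspace X - K)) Y g"
      using g by (rule continuous_map_from_subtopology)
    then show ?thesis
      using False fg by (auto intro: continuous_map_eq)
  qed
qed (use K in auto)

text \<open>Locally this is the distance to \<open>S\<close> in a metrizable chart, cut off by a bump function.\<close>
lemma local_closedin_zero_set:
  assumes X: "compact_space X" "Hausdorff_space X"
    and U: "openin X U" "x \<in> U" "metrizable_space (subtopology X U)" and S: "closedin X S"
  obtains Q g where "openin X Q" "x \<in> Q" "continuous_map X euclideanreal g"
    "\<And>y. 0 \<le> g y" "\<And>y. y \<in> S \<Longrightarrow> g y = 0" "\<And>y. y \<in> Q - S \<Longrightarrow> 0 < g y"
proof -
  obtain Q K u where Q: "openin X Q" "x \<in> Q" and K: "closedin X K" "K \<subseteq> U"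
    and u: "continuous_map X (top_of_set {0..1::real}) u"
    and u1: "\<And>y. y \<in> Q \<Longrightarrow> u y = 1" and u0: "\<And>y. y \<in> topspace X - K \<Longrightarrow> u y = 0"
    using Urysohn_bump[OF X U(1,2)] by blast
  have "closedin (subtopology X U) (U \<inter> S)"
    using S by (rule closedin_subtopology_Int_closed)
  then obtain z where z: "continuous_map (subtopology X U) euclideanreal z" and z0: "\<And>y. 0 \<le> z y"
    and zS': "\<And>y. y \<in> topspace (subtopology X U) \<Longrightarrow> z y = 0 \<longleftrightarrow> y \<in> U \<inter> S"
    using metrizable_space_closedin_zero_set[OF U(3)] by blast
  have zS: "z y = 0 \<longleftrightarrow> y \<in> S" if "y \<in> U" for y
    using zS'[of y] that openin_subset[OF U(1)] by auto
  have uR: "continuous_map X euclideanreal u"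
    using u continuous_map_into_fulltopology by blast
  have u01: "0 \<le> u y" "u y \<le> 1" if "y \<in> topspace X" for y
    using u that by (auto simp: continuous_map_def)
  define g where "g = (\<lambda>y. if y \<in> U then u y * min 1 (z y) else 0)"
  show ?thesis
  proof (rule that[OF Q])
    have "continuous_map (subtopology X U) euclideanreal (\<lambda>y. u y * min 1 (z y))"
      using continuous_map_from_subtopology[OF uR] z
      by (intro continuous_map_real_mult continuous_map_real_min) auto
    then show "continuous_map X euclideanreal g"
      unfolding g_def using u0 openin_subset[OF U(1)]
      by (intro continuous_map_if_openin_closedin[OF U(1) K]) auto
    show "0 \<le> g y" for y
      using u01 z0 openin_subset[OF U(1)] by (auto simp: g_def)
    show "g y = 0" if "y \<in> S" for y
      using zS[of y] that by (auto simp: g_def)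
    show "0 < g y" if y: "y \<in> Q - S" for y
    proof -
      have "y \<in> K"
      proof (rule ccontr)
        assume "y \<notin> K"
        then have "u y = 0"
          using u0 y openin_subset[OF Q(1)] by blast
        with u1 y show False by simp
      qed
      then have "y \<in> U"
        using K(2) by blast
      moreover have "0 < z y"
        using zS[OF \<open>y \<in> U\<close>] z0[of y] y by (auto simp: less_le)
      ultimately show ?thesis
        using u1 y by (simp add: g_def)
    qed
  qed
qed

text \<open>Sum the functions of \<open>local_closedin_zero_set\<close> over a finite subcover.\<close>
lemma compact_locally_metrizable_closedin_zero_set:
  assumes X: "compact_space X" "Hausdorff_space X"
    and loc: "\<And>x. x \<in> topspace X \<Longrightarrow> \<exists>U. openin X U \<and> x \<in> U \<and> metrizable_space (subtopology X U)"
    and S: "closedin X S"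
  obtains g where "continuous_map X euclideanreal g"
    "\<And>x. x \<in> topspace X \<Longrightarrow> 0 \<le> g x \<and> g x \<le> 1 \<and> (g x = 0 \<longleftrightarrow> x \<in> S)"
proof -
  have "\<exists>Q g. openin X Q \<and> x \<in> Q \<and> continuous_map X euclideanreal g \<and> (\<forall>y. 0 \<le> g y) \<and>
      (\<forall>y\<in>S. g y = 0) \<and> (\<forall>y\<in>Q - S. 0 < g y)" if x: "x \<in> topspace X" for x
  proof -
    obtain U where "openin X U" "x \<in> U" "metrizable_space (subtopology X U)"
      using loc[OF x] by blast
    then obtain Q g where "openin X Q" "x \<in> Q" "continuous_map X euclideanreal g"
      "\<And>y. 0 \<le> g y" "\<And>y. y \<in> S \<Longrightarrow> g y = 0" "\<And>y. y \<in> Q - S \<Longrightarrow> 0 < g y"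
      using local_closedin_zero_set[OF X _ _ _ S] by blast
    then show ?thesis by blast
  qed
  then obtain Q g where Qg: "\<And>x. x \<in> topspace X \<Longrightarrow> openin X (Q x) \<and> x \<in> Q x \<and>
      continuous_map X euclideanreal (g x) \<and> (\<forall>y. 0 \<le> g x y) \<and>
      (\<forall>y\<in>S. g x y = 0) \<and> (\<forall>y\<in>Q x - S. 0 < g x y)"
    by metis
  have g: "\<And>x. x \<in> topspace X \<Longrightarrow> continuous_map X euclideanreal (g x)"
    and g0: "\<And>x y. x \<in> topspace X \<Longrightarrow> 0 \<le> g x y"
    and gS: "\<And>x y. x \<in> topspace X \<Longrightarrow> y \<in> S \<Longrightarrow> g x y = 0"
    and gpos: "\<And>x y. x \<in> topspace X \<Longrightarrow> y \<in> Q x - S \<Longrightarrow> 0 < g x y"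
    using Qg by blast+
  obtain F where F: "finite F" "F \<subseteq> topspace X" "topspace X \<subseteq> (\<Union>x\<in>F. Q x)"
    using compact_space_pointed_cover[OF X(1)] Qg by metis
  define G where "G = (\<lambda>y. min 1 (\<Sum>x\<in>F. g x y))"
  show ?thesis
  proof (rule that[of G])
    show "continuous_map X euclideanreal G"
      unfolding G_def using F g by (intro continuous_map_real_min continuous_map_sum) auto
    fix y assume y: "y \<in> topspace X"
    have "G y = 0 \<longleftrightarrow> y \<in> S"
    proof
      assume "G y = 0"
      show "y \<in> S"
      proof (rule ccontr)
        assume "y \<notin> S"
        obtain x where "x \<in> F" "y \<in> Q x" using F y by blast
        then have "0 < (\<Sum>x\<in>F. g x y)"
          using F g0 gpos \<open>y \<notin> S\<close> by (intro sum_pos2[of F x]) auto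
        then show False
          using \<open>G y = 0\<close> by (simp add: G_def)
      qed
    next
      assume "y \<in> S"
      then have "(\<Sum>x\<in>F. g x y) = 0"
        using F(2) gS by (intro sum.neutral) auto
      then show "G y = 0"
        by (simp add: G_def)
    qed
    moreover have "0 \<le> (\<Sum>x\<in>F. g x y)"
      using F g0 by (intro sum_nonneg) auto
    ultimately show "0 \<le> G y \<and> G y \<le> 1 \<and> (G y = 0 \<longleftrightarrow> y \<in> S)"
      by (simp add: G_def)
  qed
qed

section \<open>Inward deformations\<close>

text \<open>For a compact manifold with boundary, \<open>I\<close> will be the interior.\<close>
definition inward_deformation :: "'a topology \<Rightarrow> 'a set \<Rightarrow> ('a \<Rightarrow> real) \<Rightarrow> (real \<times> 'a \<Rightarrow> 'a) \<Rightarrow> bool"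
  where "inward_deformation W I \<rho> h \<longleftrightarrow> I \<subseteq> topspace W \<and>
     continuous_map W euclideanreal \<rho> \<and> (\<forall>x\<in>topspace W. 0 \<le> \<rho> x \<and> \<rho> x \<le> 1 \<and> (\<rho> x = 0 \<longleftrightarrow> x \<notin> I)) \<and>
     continuous_map (prod_topology (top_of_set {0..1::real}) W) W h \<and>
     (\<forall>x\<in>topspace W. h (0, x) = x) \<and>
     (\<forall>t x. 0 < t \<longrightarrow> t \<le> 1 \<longrightarrow> x \<in> topspace W \<longrightarrow> h (t, x) \<in> I)"

lemma inward_deformationD:
  assumes "inward_deformation W I \<rho> h"
  shows "I \<subseteq> topspace W" and "continuous_map W euclideanreal \<rho>"
    and "\<And>x. x \<in> topspace W \<Longrightarrow> \<rho> x \<in> {0..1}"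
    and "\<And>x. x \<in> topspace W - I \<Longrightarrow> \<rho> x = 0" and "\<And>x. x \<in> I \<Longrightarrow> 0 < \<rho> x"
    and "continuous_map (prod_topology (top_of_set {0..1::real}) W) W h"
    and "\<And>x. x \<in> topspace W \<Longrightarrow> h (0, x) = x"
    and "\<And>t x. t \<in> {0..1} \<Longrightarrow> x \<in> topspace W \<Longrightarrow> 0 < t \<or> x \<in> I \<Longrightarrow> h (t, x) \<in> I"
  using assms unfolding inward_deformation_def
  by (auto simp: less_eq_real_def subset_iff)

lemma continuous_map_homotopy_apply:
  assumes h: "continuous_map (prod_topology (top_of_set {0..1::real}) W) W h"
    and a: "continuous_map Z euclideanreal a" "\<And>z. z \<in> topspace Z \<Longrightarrow> a z \<in> {0..1}"
    and b: "continuous_map Z W b"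
  shows "continuous_map Z W (\<lambda>z. h (a z, b z))"
proof -
  have "continuous_map Z (top_of_set {0..1}) a"
    using a by (auto simp: continuous_map_in_subtopology)
  then have "continuous_map Z (prod_topology (top_of_set {0..1::real}) W) (\<lambda>z. (a z, b z))"
    using b by (intro continuous_map_pairedI)
  then show ?thesis
    using continuous_map_compose[OF _ h] by (simp add: o_def)
qed

lemma homotopic_with_topspaceI:
  assumes P: "\<And>k l. (\<And>x. x \<in> topspace X \<Longrightarrow> k x = l x) \<Longrightarrow> P k \<longleftrightarrow> P l"
    and H: "continuous_map (prod_topology (top_of_set {0..1::real}) X) Y H"
    and "\<And>x. x \<in> topspace X \<Longrightarrow> H (0, x) = p x" and "\<And>x. x \<in> topspace X \<Longrightarrow> H (1, x) = q x"
    and "\<And>t. t \<in> {0..1} \<Longrightarrow> P (\<lambda>x. H (t, x))"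
  shows "homotopic_with P X Y p q"
  using homotopic_with[of X P Y p q] P assms(2-) by blast

definition inward_lift :: "('a \<Rightarrow> real) \<Rightarrow> (real \<times> 'b \<Rightarrow> 'b) \<Rightarrow> ('a \<Rightarrow> 'b) \<Rightarrow> 'a \<Rightarrow> 'b"
  where "inward_lift \<rho> h f x = h (\<rho> x, f x)"

text \<open>At time \<open>\<rho>\<^sub>1 x\<close> the deformation of \<open>W\<^sub>2\<close> moves \<open>f x\<close> into \<open>I\<^sub>2\<close> unless \<open>x\<close> is on the
  boundary, where nothing moves.\<close>
lemma inward_lift_properties:
  assumes d1: "inward_deformation W1 I1 \<rho>1 h1" and d2: "inward_deformation W2 I2 \<rho>2 h2"
    and f: "pair_map W1 (topspace W1 - I1) W2 (topspace W2 - I2) f"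
  shows "continuous_map W1 W2 (inward_lift \<rho>1 h2 f)"
    and "\<And>x. x \<in> I1 \<Longrightarrow> inward_lift \<rho>1 h2 f x \<in> I2"
    and "\<And>x. x \<in> topspace W1 - I1 \<Longrightarrow> inward_lift \<rho>1 h2 f x = f x"
    and "\<And>x. x \<in> topspace W1 - I1 \<Longrightarrow> inward_lift \<rho>1 h2 f x \<in> topspace W2 - I2"
    and "homotopic_with (\<lambda>k. k ` (topspace W1 - I1) \<subseteq> topspace W2 - I2) W1 W2 (inward_lift \<rho>1 h2 f) f"
proof -
  have fc: "continuous_map W1 W2 f" and fB: "f ` (topspace W1 - I1) \<subseteq> topspace W2 - I2"
    using f by (auto simp: pair_map_def)
  have ftop: "f x \<in> topspace W2" if "x \<in> topspace W1" for x
    using fc that by (auto simp: continuous_map_def)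
  note d1D = inward_deformationD[OF d1] and d2D = inward_deformationD[OF d2]
  show "continuous_map W1 W2 (inward_lift \<rho>1 h2 f)"
    unfolding inward_lift_def using continuous_map_homotopy_apply[OF d2D(6) d1D(2) d1D(3) fc] .
  show "inward_lift \<rho>1 h2 f x \<in> I2" if "x \<in> I1" for x
    unfolding inward_lift_def using that d1D(1) by (intro d2D(8) d1D(3) ftop) (auto intro: d1D(5))
  show eqB: "inward_lift \<rho>1 h2 f x = f x" if "x \<in> topspace W1 - I1" for x
    unfolding inward_lift_def using that d1D(4) d2D(7) ftop by auto
  show "inward_lift \<rho>1 h2 f x \<in> topspace W2 - I2" if "x \<in> topspace W1 - I1" for x
    using eqB[OF that] fB that by auto
  let ?T = "prod_topology (top_of_set {0..1::real}) W1"
  let ?H = "\<lambda>p. h2 ((1 - fst p) * \<rho>1 (snd p), f (snd p))"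
  show "homotopic_with (\<lambda>k. k ` (topspace W1 - I1) \<subseteq> topspace W2 - I2) W1 W2 (inward_lift \<rho>1 h2 f) f"
  proof (rule homotopic_with_topspaceI[where H = ?H])
    fix k l :: "'a \<Rightarrow> 'b" assume "\<And>x. x \<in> topspace W1 \<Longrightarrow> k x = l x"
    then have "k ` (topspace W1 - I1) = l ` (topspace W1 - I1)"
      by (auto intro!: image_cong)
    then show "k ` (topspace W1 - I1) \<subseteq> topspace W2 - I2 \<longleftrightarrow> l ` (topspace W1 - I1) \<subseteq> topspace W2 - I2"
      by simp
  next
    show "continuous_map ?T W2 ?H"
    proof (rule continuous_map_homotopy_apply[OF d2D(6)])
      show "continuous_map ?T euclideanreal (\<lambda>p. (1 - fst p) * \<rho>1 (snd p))"
        using continuous_map_compose[OF continuous_map_snd d1D(2)]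
        by (intro continuous_map_real_mult continuous_map_diff)
           (auto simp: o_def intro: continuous_map_into_fulltopology[OF continuous_map_fst])
      show "(1 - fst p) * \<rho>1 (snd p) \<in> {0..1}" if "p \<in> topspace ?T" for p
        using that d1D(3)[of "snd p"] by (auto simp: mult_le_one)
      show "continuous_map ?T W2 (\<lambda>p. f (snd p))"
        using continuous_map_compose[OF continuous_map_snd fc] by (simp add: o_def)
    qed
  next
    fix t :: real
    show "(\<lambda>x. ?H (t, x)) ` (topspace W1 - I1) \<subseteq> topspace W2 - I2"
      using d1D(4) d2D(7) fB ftop by auto
  qed (use d2D(7) ftop in \<open>auto simp: inward_lift_def\<close>)
qed

lemma homotopic_with_inward_deformation:
  assumes d: "inward_deformation W I \<rho> h"
    and a: "continuous_map (prod_topology (top_of_set {0..1::real}) W) euclideanreal a"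
      "\<And>t x. t \<in> {0..1} \<Longrightarrow> x \<in> topspace W \<Longrightarrow> a (t, x) \<in> {0..1}"
    and b: "continuous_map (prod_topology (top_of_set {0..1::real}) W) W b"
    and B: "\<And>t x. t \<in> {0..1} \<Longrightarrow> x \<in> topspace W - I \<Longrightarrow> a (t, x) = 0 \<and> b (t, x) \<in> topspace W - I"
    and I: "\<And>t x. t \<in> {0..1} \<Longrightarrow> x \<in> I \<Longrightarrow> 0 < a (t, x) \<or> b (t, x) \<in> I"
    and p: "\<And>x. x \<in> topspace W \<Longrightarrow> h (a (0, x), b (0, x)) = p x"
    and q: "\<And>x. x \<in> topspace W \<Longrightarrow> h (a (1, x), b (1, x)) = q x"
  shows "homotopic_with (\<lambda>k. k ` I \<subseteq> I \<and> k ` (topspace W - I) \<subseteq> topspace W - I) W W p q"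
proof -
  note dD = inward_deformationD[OF d]
  have btop: "b (t, x) \<in> topspace W" if "t \<in> {0..1}" "x \<in> topspace W" for t x
    using b that by (auto simp: continuous_map_def Pi_iff)
  show ?thesis
  proof (rule homotopic_with_topspaceI[where H = "\<lambda>p. h (a p, b p)"])
    fix k l :: "'a \<Rightarrow> 'a" assume "\<And>x. x \<in> topspace W \<Longrightarrow> k x = l x"
    then have "k ` I = l ` I" "k ` (topspace W - I) = l ` (topspace W - I)"
      using dD(1) by (auto intro!: image_cong)
    then show "k ` I \<subseteq> I \<and> k ` (topspace W - I) \<subseteq> topspace W - I \<longleftrightarrow>
        l ` I \<subseteq> I \<and> l ` (topspace W - I) \<subseteq> topspace W - I"
      by simp
  next
    show "continuous_map (prod_topology (top_of_set {0..1}) W) W (\<lambda>p. h (a p, b p))"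
      using a by (intro continuous_map_homotopy_apply[OF dD(6) a(1) _ b]) auto
  next
    fix t :: real assume t: "t \<in> {0..1}"
    have "h (a (t, x), b (t, x)) \<in> I" if "x \<in> I" for x
      using t that dD(1) by (intro dD(8) a(2) btop I) auto
    moreover have "h (a (t, x), b (t, x)) \<in> topspace W - I" if "x \<in> topspace W - I" for x
      using B[OF t that] dD(7) by auto
    ultimately show "(\<lambda>x. h (a (t, x), b (t, x))) ` I \<subseteq> I \<and>
        (\<lambda>x. h (a (t, x), b (t, x))) ` (topspace W - I) \<subseteq> topspace W - I"
      by blast
  qed (use p q in auto)
qed

lemma homotopic_with_inward_deformation_change_time:
  assumes d: "inward_deformation W I \<rho> h"
    and \<alpha>: "continuous_map W euclideanreal \<alpha>" "\<And>x. x \<in> topspace W \<Longrightarrow> \<alpha> x \<in> {0..1}"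
      "\<And>x. x \<in> I \<Longrightarrow> 0 < \<alpha> x" "\<And>x. x \<in> topspace W - I \<Longrightarrow> \<alpha> x = 0"
    and \<beta>: "continuous_map W euclideanreal \<beta>" "\<And>x. x \<in> topspace W \<Longrightarrow> \<beta> x \<in> {0..1}"
      "\<And>x. x \<in> I \<Longrightarrow> 0 < \<beta> x" "\<And>x. x \<in> topspace W - I \<Longrightarrow> \<beta> x = 0"
    and b: "continuous_map W W b" "b ` (topspace W - I) \<subseteq> topspace W - I"
  shows "homotopic_with (\<lambda>k. k ` I \<subseteq> I \<and> k ` (topspace W - I) \<subseteq> topspace W - I) W W
           (\<lambda>x. h (\<alpha> x, b x)) (\<lambda>x. h (\<beta> x, b x))"
proof (rule homotopic_with_inward_deformation[OF d,
      where a = "\<lambda>p. (1 - fst p) * \<alpha> (snd p) + fst p * \<beta> (snd p)" and b = "\<lambda>p. b (snd p)"])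
  let ?T = "prod_topology (top_of_set {0..1::real}) W"
  have "continuous_map ?T euclideanreal fst"
    using continuous_map_fst continuous_map_into_fulltopology by blast
  moreover have "continuous_map ?T euclideanreal (\<lambda>p. \<alpha> (snd p))" "continuous_map ?T euclideanreal (\<lambda>p. \<beta> (snd p))"
    using continuous_map_compose[OF continuous_map_snd \<alpha>(1)] continuous_map_compose[OF continuous_map_snd \<beta>(1)]
    by (simp_all add: o_def)
  ultimately show "continuous_map ?T euclideanreal (\<lambda>p. (1 - fst p) * \<alpha> (snd p) + fst p * \<beta> (snd p))"
    by (intro continuous_map_add continuous_map_real_mult continuous_map_diff) simp_all
  show "continuous_map ?T W (\<lambda>p. b (snd p))"
    using continuous_map_compose[OF continuous_map_snd b(1)] by (simp add: o_def)
  fix t x assume t: "t \<in> {0..1::real}"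
  show "(1 - fst (t, x)) * \<alpha> (snd (t, x)) + fst (t, x) * \<beta> (snd (t, x)) \<in> {0..1}" if "x \<in> topspace W"
    using t \<alpha>(2)[OF that] \<beta>(2)[OF that] convex_bound_le[of _ 1 _ "1 - t" t]
    by (auto intro!: add_nonneg_nonneg)
  show "0 < (1 - fst (t, x)) * \<alpha> (snd (t, x)) + fst (t, x) * \<beta> (snd (t, x)) \<or> b (snd (t, x)) \<in> I"
    if "x \<in> I"
    using t \<alpha>(3)[OF that] \<beta>(3)[OF that] by (cases "t = 1") (auto intro!: add_pos_nonneg)
  show "(1 - fst (t, x)) * \<alpha> (snd (t, x)) + fst (t, x) * \<beta> (snd (t, x)) = 0 \<and>
      b (snd (t, x)) \<in> topspace W - I" if "x \<in> topspace W - I"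
    using that \<alpha>(4) \<beta>(4) b(2) by auto
qed auto

text \<open>First change the time function from \<open>\<rho>\<^sub>2 \<circ> F\<close> to \<open>\<rho>\<^sub>1\<close>, then deform \<open>g \<circ> F\<close> to the
  identity rel boundary, finally shrink the time function to \<open>0\<close>.\<close>
lemma homotopic_with_inward_lifts_id:
  assumes d1: "inward_deformation W1 I1 \<rho>1 h1" and d2: "inward_deformation W2 I2 \<rho>2 h2"
    and f: "pair_map W1 (topspace W1 - I1) W2 (topspace W2 - I2) f"
    and g: "pair_map W2 (topspace W2 - I2) W1 (topspace W1 - I1) g"
    and gf: "homotopic_with (\<lambda>k. k ` (topspace W1 - I1) \<subseteq> topspace W1 - I1) W1 W1 (g \<circ> f) id"
  shows "homotopic_with (\<lambda>k. k ` I1 \<subseteq> I1 \<and> k ` (topspace W1 - I1) \<subseteq> topspace W1 - I1) W1 W1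
           (inward_lift \<rho>2 h1 g \<circ> inward_lift \<rho>1 h2 f) id"
proof -
  define F where "F = inward_lift \<rho>1 h2 f"
  let ?T = "prod_topology (top_of_set {0..1::real}) W1"
  let ?P = "\<lambda>k. k ` I1 \<subseteq> I1 \<and> k ` (topspace W1 - I1) \<subseteq> topspace W1 - I1"
  note d1D = inward_deformationD[OF d1] and d2D = inward_deformationD[OF d2]
  note F = inward_lift_properties[OF d1 d2 f, folded F_def]
  have gc: "continuous_map W2 W1 g" and gB: "g ` (topspace W2 - I2) \<subseteq> topspace W1 - I1"
    using g by (auto simp: pair_map_def)
  have \<rho>1T: "continuous_map ?T euclideanreal (\<lambda>p. \<rho>1 (snd p))"
    using continuous_map_compose[OF continuous_map_snd d1D(2)] by (simp add: o_def)
  have "homotopic_with ?P W1 W1 (\<lambda>x. h1 (\<rho>2 (F x), g (F x))) (\<lambda>x. h1 (\<rho>1 x, g (F x)))"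
  proof (rule homotopic_with_inward_deformation_change_time[OF d1 _ _ _ _ d1D(2,3,5,4)])
    show "continuous_map W1 euclideanreal (\<lambda>x. \<rho>2 (F x))" "continuous_map W1 W1 (\<lambda>x. g (F x))"
      using continuous_map_compose[OF F(1) d2D(2)] continuous_map_compose[OF F(1) gc] by (simp_all add: o_def)
    show "\<rho>2 (F x) \<in> {0..1}" if "x \<in> topspace W1" for x
      using d2D(3) F(1) that by (auto simp: continuous_map_def)
  qed (use F(2,4) d2D(4,5) gB in \<open>auto simp: image_subset_iff\<close>)
  moreover have "inward_lift \<rho>2 h1 g \<circ> F = (\<lambda>x. h1 (\<rho>2 (F x), g (F x)))"
    by (simp add: fun_eq_iff inward_lift_def)
  ultimately have ph1: "homotopic_with ?P W1 W1 (inward_lift \<rho>2 h1 g \<circ> F) (\<lambda>x. h1 (\<rho>1 x, g (F x)))"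
    by simp
  have "homotopic_with (\<lambda>k. k ` (topspace W1 - I1) \<subseteq> topspace W1 - I1) W1 W1 (g \<circ> F) (g \<circ> f)"
    by (rule homotopic_with_compose_continuous_map_left[OF F(5) gc]) (use gB in \<open>auto simp: image_subset_iff\<close>)
  then have "homotopic_with (\<lambda>k. k ` (topspace W1 - I1) \<subseteq> topspace W1 - I1) W1 W1 (g \<circ> F) id"
    using gf by (rule homotopic_with_trans)
  then obtain K where K: "continuous_map ?T W1 K" and K0: "\<And>x. K (0, x) = (g \<circ> F) x"
    and K1: "\<And>x. K (1, x) = id x" and KB: "\<And>t. t \<in> {0..1} \<Longrightarrow> (\<lambda>x. K (t, x)) ` (topspace W1 - I1) \<subseteq> topspace W1 - I1"
    unfolding homotopic_with_def by blast
  have ph2: "homotopic_with ?P W1 W1 (\<lambda>x. h1 (\<rho>1 x, g (F x))) (\<lambda>x. h1 (\<rho>1 x, x))"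
    by (rule homotopic_with_inward_deformation[OF d1 \<rho>1T _ K])
       (use d1D(3,4,5) KB K0 K1 in \<open>auto simp: image_subset_iff\<close>)
  have ph3: "homotopic_with ?P W1 W1 (\<lambda>x. h1 (\<rho>1 x, x)) id"
  proof (rule homotopic_with_inward_deformation[OF d1 _ _ continuous_map_snd,
        where a = "\<lambda>p. (1 - fst p) * \<rho>1 (snd p)"])
    have "continuous_map ?T euclideanreal fst"
      using continuous_map_fst continuous_map_into_fulltopology by blast
    then show "continuous_map ?T euclideanreal (\<lambda>p. (1 - fst p) * \<rho>1 (snd p))"
      by (intro continuous_map_real_mult continuous_map_diff \<rho>1T) auto
  qed (use d1D(3,4,7) in \<open>auto simp: mult_le_one\<close>)
  show ?thesis
    using homotopic_with_trans[OF ph1 homotopic_with_trans[OF ph2 ph3]] unfolding F_def .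
qed

lemma proper_homotopy_equivalent_inward_deformations:
  assumes d1: "inward_deformation W1 I1 \<rho>1 h1" and d2: "inward_deformation W2 I2 \<rho>2 h2"
    and W1: "compact_space W1" "Hausdorff_space W1" and W2: "compact_space W2" "Hausdorff_space W2"
    and "pair_homotopy_equivalent W1 (topspace W1 - I1) W2 (topspace W2 - I2)"
  shows "proper_homotopy_equivalent (subtopology W1 I1) (subtopology W2 I2)"
proof -
  obtain f g where f: "pair_map W1 (topspace W1 - I1) W2 (topspace W2 - I2) f"
    and g: "pair_map W2 (topspace W2 - I2) W1 (topspace W1 - I1) g"
    and gf: "homotopic_with (\<lambda>k. k ` (topspace W1 - I1) \<subseteq> topspace W1 - I1) W1 W1 (g \<circ> f) id"
    and fg: "homotopic_with (\<lambda>k. k ` (topspace W2 - I2) \<subseteq> topspace W2 - I2) W2 W2 (f \<circ> g) id"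
    using assms(7) unfolding pair_homotopy_equivalent_def by blast
  note F = inward_lift_properties[OF d1 d2 f] and G = inward_lift_properties[OF d2 d1 g]
  have "proper_cont (subtopology W1 I1) (subtopology W2 I2) (inward_lift \<rho>1 h2 f)"
    by (rule proper_cont_restrict_compact[OF F(1) W1(1) W2(2)]) (use F(2,4) in blast)+
  moreover have "proper_cont (subtopology W2 I2) (subtopology W1 I1) (inward_lift \<rho>2 h1 g)"
    by (rule proper_cont_restrict_compact[OF G(1) W2(1) W1(2)]) (use G(2,4) in blast)+
  moreover have "proper_homotopic (subtopology W1 I1) (subtopology W1 I1)
      (inward_lift \<rho>2 h1 g \<circ> inward_lift \<rho>1 h2 f) id"
    using homotopic_with_inward_lifts_id[OF d1 d2 f g gf] W1 by (rule proper_homotopic_restrict_compact)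
  moreover have "proper_homotopic (subtopology W2 I2) (subtopology W2 I2)
      (inward_lift \<rho>1 h2 f \<circ> inward_lift \<rho>2 h1 g) id"
    using homotopic_with_inward_lifts_id[OF d2 d1 g f fg] W2 by (rule proper_homotopic_restrict_compact)
  ultimately show ?thesis
    unfolding proper_homotopy_equivalent_def by (intro exI conjI)
qed

section \<open>Compact manifolds with boundary\<close>

lemma manifold_with_boundary_imp_Hausdorff_space:
  "manifold_with_boundary W \<Longrightarrow> Hausdorff_space W"
  unfolding manifold_with_boundary_def manifold_with_boundary_dim_def by blast

lemma openin_manifold_interior: "openin W (manifold_interior W)"
proof (subst openin_subopen, intro ballI)
  fix x assume "x \<in> manifold_interior W"
  then obtain n U V where U: "openin W U" "x \<in> U" "openin (Euclidean_space n) V"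
      "subtopology W U homeomorphic_space subtopology (Euclidean_space n) V"
    unfolding manifold_interior_def by blast
  then have "U \<subseteq> manifold_interior W"
    using openin_subset[OF U(1)] unfolding manifold_interior_def by blast
  then show "\<exists>T. openin W T \<and> x \<in> T \<and> T \<subseteq> manifold_interior W"
    using U by blast
qed

lemma manifold_with_boundary_dim_locally_metrizable:
  assumes "manifold_with_boundary_dim n W" "x \<in> topspace W"
  shows "\<exists>U. openin W U \<and> x \<in> U \<and> metrizable_space (subtopology W U)"
proof -
  obtain U V where UV: "openin W U" "x \<in> U"
    "subtopology W U homeomorphic_space subtopology (half_space n) V"
    using assms unfolding manifold_with_boundary_dim_def by blast
  have "metrizable_space (subtopology (half_space n) V)"
    unfolding half_space_def by (intro metrizable_space_subtopology metrizable_Euclidean_space)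
  then show ?thesis
    using UV homeomorphic_metrizable_space by blast
qed

lemma manifold_with_boundary_dim_0_interior:
  assumes "manifold_with_boundary_dim 0 W"
  shows "manifold_interior W = topspace W"
proof
  show "manifold_interior W \<subseteq> topspace W"
    by (auto simp: manifold_interior_def)
  show "topspace W \<subseteq> manifold_interior W"
  proof
    fix x assume x: "x \<in> topspace W"
    then obtain U V where "openin W U" "x \<in> U" "openin (half_space 0) V"
        "subtopology W U homeomorphic_space subtopology (half_space 0) V"
      using assms unfolding manifold_with_boundary_dim_def by blast
    moreover have "half_space 0 = Euclidean_space 0"
      by (simp add: half_space_def)
    ultimately show "x \<in> manifold_interior W"
      unfolding manifold_interior_def using x by auto
  qed
qed

definition shift_first :: "(nat \<Rightarrow> real) \<Rightarrow> real \<Rightarrow> nat \<Rightarrow> real"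
  where "shift_first z s = (\<lambda>i. if i = 0 then z i + s else z i)"

lemma shift_first_0 [simp]: "shift_first z 0 = z"
  by (simp add: shift_first_def fun_eq_iff)

lemma shift_first_apply_0 [simp]: "shift_first z s 0 = z 0 + s"
  by (simp add: shift_first_def)

lemma continuous_map_shift_first:
  assumes n: "n \<noteq> 0" and a: "continuous_map Z (Euclidean_space n) a"
    and s: "continuous_map Z euclideanreal s"
  shows "continuous_map Z (Euclidean_space n) (\<lambda>p. shift_first (a p) (s p))"
proof -
  have a1: "continuous_map Z (powertop_real UNIV) a" and a2: "\<And>p. p \<in> topspace Z \<Longrightarrow> \<forall>i\<ge>n. a p i = 0"
    using a unfolding Euclidean_space_def continuous_map_in_subtopology by auto
  have "continuous_map Z euclideanreal (\<lambda>p. a p k)" for k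
    using a1 unfolding continuous_map_componentwise_UNIV by blast
  then have "continuous_map Z euclideanreal (\<lambda>p. shift_first (a p) (s p) k)" for k
    unfolding shift_first_def by (cases "k = 0") (auto intro: continuous_map_add s)
  then have "continuous_map Z (powertop_real UNIV) (\<lambda>p. shift_first (a p) (s p))"
    unfolding continuous_map_componentwise_UNIV by blast
  moreover have "\<forall>i\<ge>n. shift_first (a p) (s p) i = 0" if "p \<in> topspace Z" for p
    using a2[OF that] n by (auto simp: shift_first_def)
  ultimately show ?thesis
    unfolding Euclidean_space_def continuous_map_in_subtopology by auto
qed

lemma openin_half_space:
  assumes "openin (half_space n) V"
  shows "subtopology (half_space n) V = subtopology (Euclidean_space n) V"
    and "V \<subseteq> topspace (Euclidean_space n)"
    and "\<And>z. n \<noteq> 0 \<Longrightarrow> z \<in> V \<Longrightarrow> 0 \<le> z 0"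
proof -
  have V: "V \<subseteq> topspace (Euclidean_space n) \<inter> {x. n = 0 \<or> 0 \<le> x 0}"
    using openin_subset[OF assms] by (simp add: half_space_def)
  then have "{x. n = 0 \<or> 0 \<le> x 0} \<inter> V = V"
    by blast
  then show "subtopology (half_space n) V = subtopology (Euclidean_space n) V"
    by (simp add: half_space_def subtopology_subtopology)
  show "V \<subseteq> topspace (Euclidean_space n)" "\<And>z. n \<noteq> 0 \<Longrightarrow> z \<in> V \<Longrightarrow> 0 \<le> z 0"
    using V by auto
qed

lemma openin_half_space_positive:
  assumes V: "openin (half_space n) V" and n: "n \<noteq> 0"
  shows "openin (Euclidean_space n) {x \<in> V. 0 < x 0}"
proof -
  obtain G where G: "openin (Euclidean_space n) G" "V = G \<inter> {x. 0 \<le> x 0}"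
    using V n unfolding half_space_def openin_subtopology by auto
  have "continuous_map (Euclidean_space n) euclideanreal (\<lambda>x. x 0)"
    unfolding Euclidean_space_def
    by (rule continuous_map_from_subtopology)
       (use continuous_map_product_projection[of 0 UNIV "\<lambda>_. euclideanreal"] in simp)
  then have "openin (Euclidean_space n) {x \<in> topspace (Euclidean_space n). x 0 \<in> {0<..}}"
    by (rule openin_continuous_map_preimage) (auto simp flip: open_openin)
  then have "openin (Euclidean_space n) (G \<inter> {x \<in> topspace (Euclidean_space n). x 0 \<in> {0<..}})"
    using G(1) by (rule openin_Int[rotated])
  moreover have "G \<inter> {x \<in> topspace (Euclidean_space n). x 0 \<in> {0<..}} = {x \<in> V. 0 < x 0}"
    using G openin_subset[OF G(1)] by auto
  ultimately show ?thesis
    by simp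
qed

lemma homeomorphic_maps_restrict_openin:
  assumes hm: "homeomorphic_maps (subtopology W U) (subtopology Y V) \<psi> \<psi>'"
    and U: "openin W U" and V0: "openin Y V0" "V0 \<subseteq> V" and z: "z \<in> V0"
  obtains U0 where "openin W U0" "\<psi>' z \<in> U0" "subtopology W U0 homeomorphic_space subtopology Y V0"
proof -
  have \<psi>: "continuous_map (subtopology W U) (subtopology Y V) \<psi>"
    and \<psi>': "continuous_map (subtopology Y V) (subtopology W U) \<psi>'"
    and \<psi>\<psi>': "\<And>v. v \<in> topspace (subtopology Y V) \<Longrightarrow> \<psi> (\<psi>' v) = v"
    using hm unfolding homeomorphic_maps_def by blast+
  have "openin (subtopology Y V) (V0 \<inter> V)"
    using V0(1) by (rule openin_subtopology_Int)
  then have "openin (subtopology Y V) V0"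
    using V0(2) by (simp add: Int_absorb2)
  define U0 where "U0 = {y \<in> topspace (subtopology W U). \<psi> y \<in> V0}"
  have "openin (subtopology W U) U0"
    unfolding U0_def using \<psi> \<open>openin (subtopology Y V) V0\<close> by (rule openin_continuous_map_preimage)
  then have U0: "openin W U0"
    using U openin_trans_full by blast
  have \<psi>'V0: "\<psi>' v \<in> U0" if "v \<in> topspace (subtopology Y V) \<inter> V0" for v
  proof -
    have "\<psi>' v \<in> topspace (subtopology W U)"
      using continuous_map_image_subset_topspace[OF \<psi>'] that by blast
    then show ?thesis
      using that \<psi>\<psi>'[of v] unfolding U0_def by simp
  qed
  have "homeomorphic_maps (subtopology (subtopology W U) U0) (subtopology (subtopology Y V) V0) \<psi> \<psi>'"
  proof (rule homeomorphic_maps_subtopologies_alt[OF hm])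
    show "\<psi> ` (topspace (subtopology W U) \<inter> U0) \<subseteq> V0"
      by (auto simp: U0_def)
    show "\<psi>' ` (topspace (subtopology Y V) \<inter> V0) \<subseteq> U0"
      using \<psi>'V0 by blast
  qed
  moreover have "U \<inter> U0 = U0"
    by (auto simp: U0_def)
  then have "subtopology (subtopology W U) U0 = subtopology W U0"
    by (simp add: subtopology_subtopology)
  moreover have "subtopology (subtopology Y V) V0 = subtopology Y V0"
    using V0(2) by (simp add: subtopology_subtopology Int_absorb1)
  ultimately have "subtopology W U0 homeomorphic_space subtopology Y V0"
    unfolding homeomorphic_space_def by metis
  moreover have "z \<in> topspace (subtopology Y V) \<inter> V0"
    using z V0 openin_subset[OF V0(1)] by auto
  ultimately show ?thesis
    using that U0 \<psi>'V0 by blast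
qed

lemma chart_inverse_in_manifold_interior:
  assumes n: "n \<noteq> 0" and U: "openin W U"
    and hm: "homeomorphic_maps (subtopology W U) (subtopology (half_space n) V) \<psi> \<psi>'"
    and V: "openin (half_space n) V" and z: "z \<in> V" "0 < z 0"
  shows "\<psi>' z \<in> manifold_interior W"
proof -
  obtain U0 where U0: "openin W U0" "\<psi>' z \<in> U0"
    and "subtopology W U0 homeomorphic_space subtopology (Euclidean_space n) {x \<in> V. 0 < x 0}"
    using homeomorphic_maps_restrict_openin[OF hm[unfolded openin_half_space(1)[OF V]] U
        openin_half_space_positive[OF V n]] z by blast
  moreover have "\<psi>' z \<in> topspace W"
    using U0 openin_subset by blast
  ultimately show ?thesis
    unfolding manifold_interior_def using openin_half_space_positive[OF V n] by blast
qed

lemma shift_first_compact_in_open_half_space: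
  assumes n: "n \<noteq> 0" and V: "openin (half_space n) V"
    and C: "compactin (Euclidean_space n) C" "C \<subseteq> V"
  obtains \<epsilon> where "\<epsilon> > 0" "\<And>z s. z \<in> C \<Longrightarrow> 0 \<le> s \<Longrightarrow> s \<le> \<epsilon> \<Longrightarrow> shift_first z s \<in> V"
proof -
  obtain G where G: "openin (Euclidean_space n) G" "V = G \<inter> {x. 0 \<le> x 0}"
    using V n unfolding half_space_def openin_subtopology by auto
  let ?P = "prod_topology euclideanreal (Euclidean_space n)"
  have "continuous_map ?P (Euclidean_space n) (\<lambda>p. shift_first (snd p) (fst p))"
    by (rule continuous_map_shift_first[OF n continuous_map_snd continuous_map_fst])
  then have Go: "openin ?P {p \<in> topspace ?P. shift_first (snd p) (fst p) \<in> G}"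
    using G(1) by (rule openin_continuous_map_preimage)
  have CG: "{0} \<times> C \<subseteq> {p \<in> topspace ?P. shift_first (snd p) (fst p) \<in> G}"
    using C G(2) compactin_subset_topspace[OF C(1)] by auto
  have "(0::real) \<in> topspace euclideanreal"
    by simp
  then obtain S T where ST: "openin euclideanreal S" "0 \<in> S" "C \<subseteq> T"
      "S \<times> T \<subseteq> {p \<in> topspace ?P. shift_first (snd p) (fst p) \<in> G}"
    using tube_lemma_right[OF Go C(1) _ CG] by blast
  have "open S"
    using ST(1) open_openin by blast
  then obtain e where e: "e > 0" "ball 0 e \<subseteq> S"
    using ST(2) open_contains_ball by blast
  show ?thesis
  proof (rule that[of "e/2"])
    fix z s assume z: "z \<in> C" and s: "0 \<le> s" "s \<le> e/2"
    then have "(s, z) \<in> S \<times> T"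
      using e ST(3) by (auto simp: dist_real_def)
    then have "shift_first z s \<in> G"
      using ST(4) by auto
    moreover have "0 \<le> z 0"
      using z C(2) G(2) by auto
    ultimately show "shift_first z s \<in> V"
      using G(2) s by simp
  qed (use e in simp)
qed

lemma continuous_map_chart_shift_first:
  assumes n: "n \<noteq> 0" and V: "openin (half_space n) V"
    and hm: "homeomorphic_maps (subtopology W U) (subtopology (half_space n) V) \<psi> \<psi>'"
    and b: "continuous_map Z (subtopology W U) b" and s: "continuous_map Z euclideanreal s"
    and sV: "\<And>z. z \<in> topspace Z \<Longrightarrow> shift_first (\<psi> (b z)) (s z) \<in> V"
  shows "continuous_map Z W (\<lambda>z. \<psi>' (shift_first (\<psi> (b z)) (s z)))"
proof -
  have \<psi>: "continuous_map (subtopology W U) (subtopology (Euclidean_space n) V) \<psi>"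
    and \<psi>': "continuous_map (subtopology (Euclidean_space n) V) (subtopology W U) \<psi>'"
    using hm unfolding openin_half_space(1)[OF V] homeomorphic_maps_def by blast+
  have "continuous_map Z (Euclidean_space n) (\<lambda>z. \<psi> (b z))"
    using continuous_map_compose[OF b \<psi>] by (simp add: o_def continuous_map_in_subtopology)
  then have "continuous_map Z (Euclidean_space n) (\<lambda>z. shift_first (\<psi> (b z)) (s z))"
    by (rule continuous_map_shift_first[OF n _ s])
  then have "continuous_map Z (subtopology (Euclidean_space n) V) (\<lambda>z. shift_first (\<psi> (b z)) (s z))"
    using sV by (simp add: continuous_map_in_subtopology image_subset_iff)
  then show ?thesis
    using continuous_map_into_fulltopology[OF continuous_map_compose[OF _ \<psi>']] by (simp add: o_def)
qed

definition local_inward_push :: "'a topology \<Rightarrow> 'a set \<Rightarrow> 'a set \<Rightarrow> (real \<times> 'a \<Rightarrow> 'a) \<Rightarrow> bool"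
  where "local_inward_push W I Q p \<longleftrightarrow> openin W Q \<and>
     continuous_map (prod_topology (top_of_set {0..1::real}) W) W p \<and>
     (\<forall>y\<in>topspace W. p (0, y) = y) \<and>
     (\<forall>t y. 0 < t \<longrightarrow> t \<le> 1 \<longrightarrow> y \<in> Q \<longrightarrow> p (t, y) \<in> I) \<and>
     (\<forall>t y. 0 \<le> t \<longrightarrow> t \<le> 1 \<longrightarrow> y \<in> topspace W \<longrightarrow> p (t, y) = y \<or> p (t, y) \<in> I)"

lemma continuous_map_chart_push:
  assumes n: "n \<noteq> 0" and U: "openin W U" and V: "openin (half_space n) V"
    and hm: "homeomorphic_maps (subtopology W U) (subtopology (half_space n) V) \<psi> \<psi>'"
    and K: "closedin W K" "K \<subseteq> U"
    and v: "continuous_map W euclideanreal v" and v0: "\<And>y. y \<in> topspace W - K \<Longrightarrow> v y = 0"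
    and sV: "\<And>t y. t \<in> {0..1} \<Longrightarrow> y \<in> U \<Longrightarrow> shift_first (\<psi> y) (t * v y) \<in> V"
  shows "continuous_map (prod_topology (top_of_set {0..1::real}) W) W
           (\<lambda>(t, y). if y \<in> U then \<psi>' (shift_first (\<psi> y) (t * v y)) else y)"
proof (rule continuous_map_eq)
  let ?P = "prod_topology (top_of_set {0..1::real}) W"
  let ?S = "subtopology ?P ({0..1} \<times> U)"
  have \<psi>'\<psi>: "\<And>y. y \<in> U \<Longrightarrow> \<psi>' (\<psi> y) = y"
    using hm openin_subset[OF U] by (auto simp: homeomorphic_maps_def)
  show "continuous_map ?P W
      (\<lambda>r. if r \<in> {0..1} \<times> U then \<psi>' (shift_first (\<psi> (snd r)) (fst r * v (snd r))) else snd r)"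
  proof (rule continuous_map_if_openin_closedin)
    show "openin ?P ({0..1} \<times> U)" "closedin ?P ({0..1} \<times> K)"
      using U K(1) by (auto simp: openin_prod_Times_iff closedin_prod_Times_iff)
    show "continuous_map ?S W (\<lambda>r. \<psi>' (shift_first (\<psi> (snd r)) (fst r * v (snd r))))"
    proof (rule continuous_map_chart_shift_first[OF n V hm])
      have "continuous_map ?S W snd"
        by (rule continuous_map_from_subtopology[OF continuous_map_snd])
      then show "continuous_map ?S (subtopology W U) snd"
        by (auto simp: continuous_map_in_subtopology)
      show "continuous_map ?S euclideanreal (\<lambda>r. fst r * v (snd r))"
        using continuous_map_compose[OF continuous_map_snd v]
        by (intro continuous_map_real_mult continuous_map_from_subtopology)
           (auto simp: o_def intro: continuous_map_into_fulltopology[OF continuous_map_fst])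
      show "shift_first (\<psi> (snd r)) (fst r * v (snd r)) \<in> V" if "r \<in> topspace ?S" for r
        using that sV by auto
    qed
    show "\<psi>' (shift_first (\<psi> (snd r)) (fst r * v (snd r))) = snd r"
      if rUK: "r \<in> {0..1} \<times> U - {0..1} \<times> K" for r
    proof -
      have "snd r \<in> U" "snd r \<notin> K"
        using rUK by (auto simp: mem_Times_iff)
      then have "v (snd r) = 0"
        using v0 openin_subset[OF U] by blast
      then show ?thesis
        using \<psi>'\<psi>[OF \<open>snd r \<in> U\<close>] by simp
    qed
  qed (use K(2) continuous_map_snd in auto)
next
  fix r assume "r \<in> topspace (prod_topology (top_of_set {0..1::real}) W)"
  then show "(if r \<in> {0..1} \<times> U then \<psi>' (shift_first (\<psi> (snd r)) (fst r * v (snd r))) else snd r) =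
      (case r of (t, y) \<Rightarrow> if y \<in> U then \<psi>' (shift_first (\<psi> y) (t * v y)) else y)"
    by (cases r) simp
qed

text \<open>A point that has moved up at all has positive first coordinate, so it is an interior point.\<close>
lemma chart_local_inward_push:
  assumes n: "n \<noteq> 0" and U: "openin W U" and V: "openin (half_space n) V"
    and hm: "homeomorphic_maps (subtopology W U) (subtopology (half_space n) V) \<psi> \<psi>'"
    and K: "closedin W K" "K \<subseteq> U" and Q: "openin W Q"
    and v: "continuous_map W euclideanreal v" "\<And>y. y \<in> topspace W \<Longrightarrow> 0 \<le> v y"
    and v0: "\<And>y. y \<in> topspace W - K \<Longrightarrow> v y = 0" and vQ: "\<And>y. y \<in> Q \<Longrightarrow> 0 < v y"
    and sV: "\<And>t y. t \<in> {0..1} \<Longrightarrow> y \<in> U \<Longrightarrow> shift_first (\<psi> y) (t * v y) \<in> V"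
  shows "local_inward_push W (manifold_interior W) Q
           (\<lambda>(t, y). if y \<in> U then \<psi>' (shift_first (\<psi> y) (t * v y)) else y)"
    (is "local_inward_push W _ Q ?p")
proof -
  have \<psi>'\<psi>: "\<And>y. y \<in> U \<Longrightarrow> \<psi>' (\<psi> y) = y"
    and \<psi>: "continuous_map (subtopology W U) (subtopology (half_space n) V) \<psi>"
    using hm openin_subset[OF U] by (auto simp: homeomorphic_maps_def)
  have QU: "Q \<subseteq> U"
    using v0 vQ K(2) openin_subset[OF Q] by force
  have interior: "?p (t, y) \<in> manifold_interior W" if "y \<in> U" "t \<in> {0..1}" "0 < t * v y" for t y
  proof -
    have "\<psi> y \<in> V"
      using \<psi> that(1) openin_subset[OF U] by (auto simp: continuous_map_def)
    then have "0 < shift_first (\<psi> y) (t * v y) 0"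
      using openin_half_space(3)[OF V n] that(3) by (simp add: add_nonneg_pos)
    then show ?thesis
      using chart_inverse_in_manifold_interior[OF n U hm V sV[OF that(2,1)]] that(1) by simp
  qed
  have "?p (t, y) = y \<or> ?p (t, y) \<in> manifold_interior W"
    if "0 \<le> t" "t \<le> 1" "y \<in> topspace W" for t y
  proof (cases "y \<in> U \<and> t * v y \<noteq> 0")
    case True
    then show ?thesis
      using interior[of y t] v(2)[OF that(3)] that(1,2) by (simp add: less_le)
  next
    case False
    then show ?thesis
      using \<psi>'\<psi>[of y] by (cases "y \<in> U") auto
  qed
  moreover have "?p (t, y) \<in> manifold_interior W" if "0 < t" "t \<le> 1" "y \<in> Q" for t y
    using interior[of y t] that QU vQ[OF that(3)] by auto
  moreover have "?p (0, y) = y" if "y \<in> topspace W" for y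
    using \<psi>'\<psi>[of y] by simp
  ultimately show ?thesis
    unfolding local_inward_push_def using Q continuous_map_chart_push[OF n U V hm K v(1) v0 sV]
    by (intro conjI allI impI ballI) simp_all
qed

text \<open>The speed is a bump function equal to \<open>1\<close> near \<open>x\<close>, scaled by a bound \<open>\<epsilon>\<close> that keeps the
  compact support inside the chart.\<close>
lemma manifold_with_boundary_local_inward_push:
  assumes M: "manifold_with_boundary_dim n W" and W: "compact_space W" and n: "n \<noteq> 0"
    and x: "x \<in> topspace W"
  obtains Q p where "local_inward_push W (manifold_interior W) Q p" "x \<in> Q"
proof -
  obtain U V \<psi> \<psi>' where U: "openin W U" "x \<in> U" and V: "openin (half_space n) V"
    and hm: "homeomorphic_maps (subtopology W U) (subtopology (half_space n) V) \<psi> \<psi>'"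
    using M x unfolding manifold_with_boundary_dim_def homeomorphic_space_def by metis
  have \<psi>: "continuous_map (subtopology W U) (subtopology (half_space n) V) \<psi>"
    using hm by (auto simp: homeomorphic_maps_def)
  obtain Q K u where Q: "openin W Q" "x \<in> Q" and K: "closedin W K" "K \<subseteq> U"
    and u: "continuous_map W (top_of_set {0..1::real}) u"
    and u1: "\<And>y. y \<in> Q \<Longrightarrow> u y = 1" and u0: "\<And>y. y \<in> topspace W - K \<Longrightarrow> u y = 0"
    using Urysohn_bump[OF W _ U] M unfolding manifold_with_boundary_dim_def by blast
  have u01: "u y \<in> {0..1}" if "y \<in> topspace W" for y
    using u that by (auto simp: continuous_map_def)
  have "compactin (subtopology (half_space n) V) (\<psi> ` K)"
    using K closedin_compact_space[OF W] by (intro image_compactin[OF _ \<psi>]) (auto simp: compactin_subtopology)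
  then have "compactin (Euclidean_space n) (\<psi> ` K)" "\<psi> ` K \<subseteq> V"
    unfolding openin_half_space(1)[OF V] by (auto simp: compactin_subtopology)
  then obtain \<epsilon> where \<epsilon>: "\<epsilon> > 0" "\<And>z s. z \<in> \<psi> ` K \<Longrightarrow> 0 \<le> s \<Longrightarrow> s \<le> \<epsilon> \<Longrightarrow> shift_first z s \<in> V"
    using shift_first_compact_in_open_half_space[OF n V] by metis
  have "local_inward_push W (manifold_interior W) Q
      (\<lambda>(t, y). if y \<in> U then \<psi>' (shift_first (\<psi> y) (t * (\<epsilon> * u y))) else y)"
  proof (rule chart_local_inward_push[OF n U(1) V hm K Q(1)])
    show "continuous_map W euclideanreal (\<lambda>y. \<epsilon> * u y)"
      using u by (intro continuous_map_real_mult) (auto intro: continuous_map_into_fulltopology)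
    show "shift_first (\<psi> y) (t * (\<epsilon> * u y)) \<in> V" if t: "t \<in> {0..1}" and y: "y \<in> U" for t y
    proof (cases "y \<in> K")
      case True
      have "0 \<le> t * (\<epsilon> * u y) \<and> t * (\<epsilon> * u y) \<le> \<epsilon>"
        using t u01[of y] y openin_subset[OF U(1)] \<epsilon>(1) mult_le_one[of t "u y"]
        by (auto simp: mult.left_commute[of t] mult_le_cancel_left1)
      then show ?thesis
        using \<epsilon>(2)[of "\<psi> y"] True by blast
    next
      case False
      then have "u y = 0"
        using u0 y openin_subset[OF U(1)] by blast
      moreover have "\<psi> y \<in> V"
        using \<psi> y openin_subset[OF U(1)] by (auto simp: continuous_map_def)
      ultimately show ?thesis
        by simp
    qed
  qed (use \<epsilon>(1) u01 u0 u1 in auto)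
  then show ?thesis
    using Q(2) by (rule that)
qed

fun compose_pushes :: "('a set \<times> (real \<times> 'a \<Rightarrow> 'a)) list \<Rightarrow> real \<times> 'a \<Rightarrow> 'a" where
  "compose_pushes [] = snd"
| "compose_pushes (Qp # Qps) = (\<lambda>r. snd Qp (fst r, compose_pushes Qps r))"

lemma local_inward_pushD:
  assumes "local_inward_push W I Q p"
  shows "openin W Q" and "continuous_map (prod_topology (top_of_set {0..1::real}) W) W p"
    and "\<And>y. y \<in> topspace W \<Longrightarrow> p (0, y) = y"
    and "\<And>t y. 0 < t \<Longrightarrow> t \<le> 1 \<Longrightarrow> y \<in> Q \<Longrightarrow> p (t, y) \<in> I"
    and "\<And>t y. 0 \<le> t \<Longrightarrow> t \<le> 1 \<Longrightarrow> y \<in> topspace W \<Longrightarrow> p (t, y) = y \<or> p (t, y) \<in> I"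
  using assms unfolding local_inward_push_def by auto

lemma local_inward_push_compose_pushes:
  assumes "\<And>Qp. Qp \<in> set Qps \<Longrightarrow> local_inward_push W I (fst Qp) (snd Qp)"
  shows "local_inward_push W I (\<Union> (fst ` set Qps)) (compose_pushes Qps)"
  using assms
proof (induction Qps)
  case Nil
  then show ?case
    by (simp add: local_inward_push_def continuous_map_snd)
next
  case (Cons Qp Qps)
  obtain Q p where Qp: "Qp = (Q, p)"
    by fastforce
  let ?P = "prod_topology (top_of_set {0..1::real}) W"
  let ?c = "compose_pushes Qps"
  have c: "local_inward_push W I (\<Union> (fst ` set Qps)) ?c" and "local_inward_push W I Q p"
    using Cons Qp by auto
  note c = local_inward_pushD[OF c] and p = local_inward_pushD[OF this(2)]
  have ctop: "?c (t, y) \<in> topspace W" if "0 \<le> t" "t \<le> 1" "y \<in> topspace W" for t y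
    using c(2) that by (auto simp: continuous_map_def Pi_iff)
  have pI: "p (t, ?c (t, y)) \<in> I" if "0 \<le> t" "t \<le> 1" "y \<in> topspace W" "?c (t, y) \<in> I" for t y
    using p(5)[OF that(1,2) ctop[OF that(1-3)]] that(4) by auto
  have "continuous_map ?P ?P (\<lambda>r. (fst r, ?c r))"
    using c(2) by (intro continuous_map_pairedI continuous_map_fst)
  then have "continuous_map ?P W (\<lambda>r. p (fst r, ?c r))"
    using continuous_map_compose[OF _ p(2)] by (simp add: o_def)
  moreover have "p (t, ?c (t, y)) \<in> I" if "0 < t" "t \<le> 1" "y \<in> Q \<union> \<Union> (fst ` set Qps)" for t y
  proof -
    have y: "y \<in> topspace W"
      using that(3) openin_subset[OF p(1)] openin_subset[OF c(1)] by blast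
    show ?thesis
    proof (cases "y \<in> \<Union> (fst ` set Qps)")
      case True
      then show ?thesis
        using c(4)[OF that(1,2) True] pI[OF _ that(2) y] that(1) by simp
    next
      case False
      then have "y \<in> Q"
        using that(3) by blast
      show ?thesis
      proof (cases "?c (t, y) = y")
        case True
        then show ?thesis
          using p(4)[OF that(1,2) \<open>y \<in> Q\<close>] by simp
      next
        case False
        then show ?thesis
          using c(5)[OF _ that(2) y] pI[OF _ that(2) y] that(1) by simp
      qed
    qed
  qed
  moreover have "p (t, ?c (t, y)) = y \<or> p (t, ?c (t, y)) \<in> I" if "0 \<le> t" "t \<le> 1" "y \<in> topspace W" for t y
    using c(5)[OF that] p(5)[OF that] pI[OF that] by auto
  ultimately show ?case
    using p(1,3) c(1,3) Qp unfolding local_inward_push_def by (auto simp: ctop)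
qed

lemma compact_manifold_with_boundary_inward_homotopy:
  assumes M: "manifold_with_boundary_dim n W" and W: "compact_space W"
  obtains h where "local_inward_push W (manifold_interior W) (topspace W) h"
proof (cases "n = 0")
  case True
  then show ?thesis
    using that[of snd] manifold_with_boundary_dim_0_interior[of W] M
    by (simp add: local_inward_push_def continuous_map_snd)
next
  case False
  have "\<exists>Q p. local_inward_push W (manifold_interior W) Q p \<and> x \<in> Q" if "x \<in> topspace W" for x
    using manifold_with_boundary_local_inward_push[OF M W False that] by blast
  then obtain Q p where Qp: "\<And>x. x \<in> topspace W \<Longrightarrow> local_inward_push W (manifold_interior W) (Q x) (p x) \<and> x \<in> Q x"
    by metis
  have Qo: "openin W (Q x)" and "x \<in> Q x" if "x \<in> topspace W" for x
    using Qp[OF that] local_inward_pushD(1) by auto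
  then obtain F where F: "finite F" "F \<subseteq> topspace W" "topspace W \<subseteq> (\<Union>x\<in>F. Q x)"
    using compact_space_pointed_cover[OF W] by metis
  obtain xs where "set xs = F"
    using finite_list[OF F(1)] by blast
  then have "local_inward_push W (manifold_interior W) (\<Union> (fst ` set (map (\<lambda>x. (Q x, p x)) xs)))
      (compose_pushes (map (\<lambda>x. (Q x, p x)) xs))"
    using Qp F(2) by (intro local_inward_push_compose_pushes) auto
  moreover have "Q x \<subseteq> topspace W" if "x \<in> topspace W" for x
    using Qo[OF that] by (rule openin_subset)
  then have "\<Union> (fst ` set (map (\<lambda>x. (Q x, p x)) xs)) = topspace W"
    using \<open>set xs = F\<close> F by auto
  ultimately have "local_inward_push W (manifold_interior W) (topspace W) (compose_pushes (map (\<lambda>x. (Q x, p x)) xs))"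
    by simp
  then show ?thesis
    by (rule that)
qed

lemma compact_manifold_with_boundary_inward_deformation:
  assumes M: "manifold_with_boundary W" and W: "compact_space W"
  obtains \<rho> h where "inward_deformation W (manifold_interior W) \<rho> h"
proof -
  obtain n where Mn: "manifold_with_boundary_dim n W"
    using M unfolding manifold_with_boundary_def by blast
  have "closedin W (topspace W - manifold_interior W)"
    using openin_manifold_interior by (rule closedin_diff[OF closedin_topspace])
  then obtain \<rho> where "continuous_map W euclideanreal \<rho>"
    "\<And>x. x \<in> topspace W \<Longrightarrow> 0 \<le> \<rho> x \<and> \<rho> x \<le> 1 \<and> (\<rho> x = 0 \<longleftrightarrow> x \<in> topspace W - manifold_interior W)"
    using compact_locally_metrizable_closedin_zero_set[OF W _ manifold_with_boundary_dim_locally_metrizable[OF Mn]] Mn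
    unfolding manifold_with_boundary_dim_def by blast
  moreover obtain h where "local_inward_push W (manifold_interior W) (topspace W) h"
    using compact_manifold_with_boundary_inward_homotopy[OF Mn W] by blast
  moreover have "manifold_interior W \<subseteq> topspace W"
    unfolding manifold_interior_def by blast
  ultimately have "inward_deformation W (manifold_interior W) \<rho> h"
    unfolding inward_deformation_def local_inward_push_def by auto
  then show ?thesis
    by (rule that)
qed

theorem lemma3p6:
  fixes M :: "'a topology" and N :: "'b topology"
    and W1 :: "'u topology" and W2 :: "'v topology"
    and X :: "'c topology" and A :: "'c set"
    and Y :: "'d topology" and B :: "'d set"
  assumes "model_via W1 M X A"
    and "model_via W2 N Y B"
    and "pair_homotopy_equivalent X A Y B"
  shows "proper_homotopy_equivalent M N"
proof -
  have W1: "manifold_with_boundary W1" "compact_space W1"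
      "M homeomorphic_space subtopology W1 (manifold_interior W1)"
    and W2: "manifold_with_boundary W2" "compact_space W2"
      "N homeomorphic_space subtopology W2 (manifold_interior W2)"
    and XW1: "pair_homotopy_equivalent X A W1 (manifold_boundary W1)"
    and YW2: "pair_homotopy_equivalent Y B W2 (manifold_boundary W2)"
    using assms(1,2) unfolding model_via_def tame_compactification_def by auto
  have "pair_homotopy_equivalent W1 (manifold_boundary W1) Y B"
    by (rule pair_homotopy_equivalent_trans[OF pair_homotopy_equivalent_sym[OF XW1] assms(3)])
  then have "pair_homotopy_equivalent W1 (manifold_boundary W1) W2 (manifold_boundary W2)"
    using YW2 by (rule pair_homotopy_equivalent_trans)
  moreover obtain \<rho>1 h1 where "inward_deformation W1 (manifold_interior W1) \<rho>1 h1"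
    using compact_manifold_with_boundary_inward_deformation[OF W1(1,2)] .
  moreover obtain \<rho>2 h2 where "inward_deformation W2 (manifold_interior W2) \<rho>2 h2"
    using compact_manifold_with_boundary_inward_deformation[OF W2(1,2)] .
  ultimately have "proper_homotopy_equivalent (subtopology W1 (manifold_interior W1))
      (subtopology W2 (manifold_interior W2))"
    using W1(1,2) W2(1,2) manifold_with_boundary_imp_Hausdorff_space
    unfolding manifold_boundary_def by (metis proper_homotopy_equivalent_inward_deformations)
  then show ?thesis
    by (rule proper_homotopy_equivalent_homeomorphic_spaces[OF W1(3) W2(3)])
qed

end
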